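(* Consider the energy-efficiency maximization problem (P1) described in the context. The maximum of the system energy efficiency $\eta_{EE}$ over the feasible set of (P1) can always be obtained with the power beacon transmitting at full power, $P_0=P_{\max}$ (so that the power variables reduce to $(p_1,\dots,p_K)$).
   Context: System: one power beacon (PB) with transmit power $P_0\ge 0$, one MEC server, a reconfigurable intelligent surface (RIS) with $N$ elements, and $K$ wireless devices (WDs), all nodes single-antenna. Given channels $g_{\mathrm{PU},k}\in\mathbb{C}$, $\mathbf{g}_{\mathrm{PI}},\mathbf{g}_{\mathrm{IU},k}\in\mathbb{C}^{N}$, $h_{\mathrm{UM},k}\in\mathbb{C}$, $\mathbf{h}_{\mathrm{UI},k},\mathbf{h}_{\mathrm{IM}}\in\mathbb{C}^{N}$. For phases $\boldsymbol\theta=(\theta_1,\dots,\theta_N)$ let $\boldsymbol\Theta=\mathrm{diag}(e^{j\theta_1},\dots,e^{j\theta_N})$ and $g_k=g_{\mathrm{PU},k}+\mathbf{g}_{\mathrm{PI}}^H\boldsymbol\Theta\mathbf{g}_{\mathrm{IU},k}$, $h_k=h_{\mathrm{UM},k}+\mathbf{h}_{\mathrm{UI},k}^H\boldsymbol\Theta\mathbf{h}_{\mathrm{IM}}$. Optimization variables: backscatter times $t^b_k\ge0$, active-transmission times $t^o_k\ge0$, backscattering coefficients $\rho_k\in[0,1]$, PB power $P_0\le P_{\max}$, WD transmit powers $p_k\ge0$, execution times $0\le\tau_k\le T$, CPU frequencies $0\le f_k\le f_{\max}$, and phases $\theta_n$ (unit-modulus reflection). Positive constants: $T,\sigma^2,\zeta,C_{\mathrm{cpu}},\epsilon_k,\delta,P_{c,k},p_{c,k},a_k,b_k,c_k$,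 $Q_k\ge0$, $\gamma_{\min,k}$. Throughputs: $\Gamma^b_k=t^b_k\log_2\!\big(1+\zeta\rho_kP_0|h_k|^2|g_k|^2/\sigma^2\big)$, $\Gamma^o_k=t^o_k\log_2\!\big(1+p_k|h_k|^2/\sigma^2\big)$, $\Gamma_k=\tau_kf_k/C_{\mathrm{cpu}}$, $R_{\mathrm{sum}}=\sum_{k=1}^K(\Gamma^b_k+\Gamma^o_k+\Gamma_k)$. Energies: $E_{1,k}=P_{c,k}t^b_k$, $E_{2,k}=\frac{p_k}{\delta}t^o_k+p_{c,k}t^o_k+\epsilon_kf_k^3\tau_k$, $E_{\mathrm{total}}=\sum_k(E_{1,k}+E_{2,k})$. Harvested energy: $E^b_k=\Big(\frac{a_k(1-\rho_k)P_0|g_k|^2+b_k}{(1-\rho_k)P_0|g_k|^2+c_k}-\frac{b_k}{c_k}\Big)t^b_k$, $P^b_k=\frac{a_kP_0|g_k|^2+b_k}{P_0|g_k|^2+c_k}-\frac{b_k}{c_k}$, $E^t_k=E^b_k+\sum_{i\ne k}P^b_kt^b_i$. Problem (P1): maximize $\eta_{EE}=R_{\mathrm{sum}}/E_{\mathrm{total}}$ over all the variables subject to: $\Gamma^b_k+\Gamma^o_k+\Gamma_k\ge\gamma_{\min,k}$ for all $k$; $E_{1,k}+E_{2,k}\le E^t_k+Q_k$ for all $k$; $\sum_{k=1}^K(t^b_k+t^o_k)\le T$ and $0\le\tau_k\le T$; $0\le f_k\le f_{\max}$; $0\le\rho_k\le1$; $P_0\le P_{\max}$; $|e^{j\theta_n}|=1$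 for all $n$; $p_k,t^b_k,t^o_k\ge0$.
   Formalization: The harvesting constants satisfy $b_k \le a_k c_k$ for every device k, and the maximum means that each feasible point is matched or exceeded in $\eta_{EE}$ by a feasible point with $P_0=P_{\max}$. Apart from conventions, each condition added here is assumed in the paper as well or is needed for the statement above to hold. *)

theory Defs
  imports Complex_Main
begin

text \<open>System parameters: K devices indexed by {..<K}, N RIS elements indexed by {..<N}.
  Vectors in C^N are functions nat => complex restricted to indices < N.\<close>

record sys =
  sK :: nat
  sN :: nat
  sT :: real
  ssigma2 :: real
  szeta :: real
  sCcpu :: real
  seps :: "nat \<Rightarrow> real"
  sdelta :: real
  sPc :: "nat \<Rightarrow> real"
  spc :: "nat \<Rightarrow> real"
  sa :: "nat \<Rightarrow> real"
  sb :: "nat \<Rightarrow> real"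
  sc :: "nat \<Rightarrow> real"
  sQ :: "nat \<Rightarrow> real"
  sgmin :: "nat \<Rightarrow> real"
  sPmax :: real
  sfmax :: real
  sgPU :: "nat \<Rightarrow> complex"
  sgPI :: "nat \<Rightarrow> complex"
  sgIU :: "nat \<Rightarrow> nat \<Rightarrow> complex"
  shUM :: "nat \<Rightarrow> complex"
  shUI :: "nat \<Rightarrow> nat \<Rightarrow> complex"
  shIM :: "nat \<Rightarrow> complex"

record vars =
  vtb :: "nat \<Rightarrow> real"
  vto :: "nat \<Rightarrow> real"
  vrho :: "nat \<Rightarrow> real"
  vP0 :: real
  vp :: "nat \<Rightarrow> real"
  vtau :: "nat \<Rightarrow> real"
  vf :: "nat \<Rightarrow> real"
  vtheta :: "nat \<Rightarrow> real"

definition gk :: "sys \<Rightarrow> vars \<Rightarrow> nat \<Rightarrow> complex" where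
  "gk S v k = sgPU S k +
     (\<Sum>n<sN S. cnj (sgPI S n) * exp (\<i> * complex_of_real (vtheta v n)) * sgIU S k n)"

definition hk :: "sys \<Rightarrow> vars \<Rightarrow> nat \<Rightarrow> complex" where
  "hk S v k = shUM S k +
     (\<Sum>n<sN S. cnj (shUI S k n) * exp (\<i> * complex_of_real (vtheta v n)) * shIM S n)"

definition Gam_b :: "sys \<Rightarrow> vars \<Rightarrow> nat \<Rightarrow> real" where
  "Gam_b S v k = vtb v k * log 2 (1 + szeta S * vrho v k * vP0 v
       * (cmod (hk S v k))\<^sup>2 * (cmod (gk S v k))\<^sup>2 / ssigma2 S)"

definition Gam_o :: "sys \<Rightarrow> vars \<Rightarrow> nat \<Rightarrow> real" where
  "Gam_o S v k = vto v k * log 2 (1 + vp v k * (cmod (hk S v k))\<^sup>2 / ssigma2 S)"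

definition Gam_l :: "sys \<Rightarrow> vars \<Rightarrow> nat \<Rightarrow> real" where
  "Gam_l S v k = vtau v k * vf v k / sCcpu S"

definition Rsum :: "sys \<Rightarrow> vars \<Rightarrow> real" where
  "Rsum S v = (\<Sum>k<sK S. Gam_b S v k + Gam_o S v k + Gam_l S v k)"

definition E1 :: "sys \<Rightarrow> vars \<Rightarrow> nat \<Rightarrow> real" where
  "E1 S v k = sPc S k * vtb v k"

definition E2 :: "sys \<Rightarrow> vars \<Rightarrow> nat \<Rightarrow> real" where
  "E2 S v k = vp v k / sdelta S * vto v k + spc S k * vto v k + seps S k * vf v k ^ 3 * vtau v k"

definition Etotal :: "sys \<Rightarrow> vars \<Rightarrow> real" where
  "Etotal S v = (\<Sum>k<sK S. E1 S v k + E2 S v k)"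

definition Eb :: "sys \<Rightarrow> vars \<Rightarrow> nat \<Rightarrow> real" where
  "Eb S v k = ((sa S k * (1 - vrho v k) * vP0 v * (cmod (gk S v k))\<^sup>2 + sb S k)
               / ((1 - vrho v k) * vP0 v * (cmod (gk S v k))\<^sup>2 + sc S k)
             - sb S k / sc S k) * vtb v k"

definition Pb :: "sys \<Rightarrow> vars \<Rightarrow> nat \<Rightarrow> real" where
  "Pb S v k = (sa S k * vP0 v * (cmod (gk S v k))\<^sup>2 + sb S k)
               / (vP0 v * (cmod (gk S v k))\<^sup>2 + sc S k) - sb S k / sc S k"

definition Et :: "sys \<Rightarrow> vars \<Rightarrow> nat \<Rightarrow> real" where
  "Et S v k = Eb S v k + (\<Sum>i\<in>{..<sK S} - {k}. Pb S v k * vtb v i)"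

definition EE :: "sys \<Rightarrow> vars \<Rightarrow> real" where
  "EE S v = Rsum S v / Etotal S v"

text \<open>Feasible set of (P1). Unit-modulus reflection is built in (Theta entries are exp(i theta_n)).\<close>

definition feasible :: "sys \<Rightarrow> vars \<Rightarrow> bool" where
  "feasible S v \<longleftrightarrow>
     (\<forall>k<sK S. Gam_b S v k + Gam_o S v k + Gam_l S v k \<ge> sgmin S k) \<and>
     (\<forall>k<sK S. E1 S v k + E2 S v k \<le> Et S v k + sQ S k) \<and>
     (\<Sum>k<sK S. vtb v k + vto v k) \<le> sT S \<and>
     (\<forall>k<sK S. 0 \<le> vtau v k \<and> vtau v k \<le> sT S) \<and>
     (\<forall>k<sK S. 0 \<le> vf v k \<and> vf v k \<le> sfmax S) \<and>
     (\<forall>k<sK S. 0 \<le> vrho v k \<and> vrho v k \<le> 1) \<and>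
     0 \<le> vP0 v \<and> vP0 v \<le> sPmax S \<and>
     (\<forall>k<sK S. 0 \<le> vp v k \<and> 0 \<le> vtb v k \<and> 0 \<le> vto v k)"

end

theory Submission
  imports Defs
begin

text \<open>Keep every variable of a feasible point and raise the beacon power to \<open>P\<^sub>m\<^sub>a\<^sub>x\<close>.
  The consumed energy does not involve \<open>P\<^sub>0\<close>, while the backscatter rates grow with \<open>P\<^sub>0\<close> by
  monotonicity of \<open>log\<close>, and so do the harvested energies: the harvesting curve
  \<open>(a x + b) / (x + c)\<close> is nondecreasing in the received power \<open>x \<ge> 0\<close> precisely when \<open>b \<le> a c\<close>.
  So the point stays feasible and its sum rate, hence its energy efficiency, can only increase.\<close>

lemma affine_ratio_mono:
  fixes a b c x y :: real
  assumes "0 < c" "b \<le> a * c" "0 \<le> x" "x \<le> y"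
  shows "(a * x + b) / (x + c) \<le> (a * y + b) / (y + c)"
proof -
  have "0 \<le> (a * c - b) * (y - x)"
    using assms by simp
  then have "(a * x + b) * (y + c) \<le> (a * y + b) * (x + c)"
    by (simp add: algebra_simps)
  then show ?thesis
    using assms by (simp add: divide_simps)
qed

lemma gk_vP0_update [simp]: "gk S (v\<lparr>vP0 := P\<rparr>) k = gk S v k"
  by (simp add: gk_def)

lemma hk_vP0_update [simp]: "hk S (v\<lparr>vP0 := P\<rparr>) k = hk S v k"
  by (simp add: hk_def)

lemma Gam_o_vP0_update [simp]: "Gam_o S (v\<lparr>vP0 := P\<rparr>) k = Gam_o S v k"
  by (simp add: Gam_o_def)

lemma Gam_l_vP0_update [simp]: "Gam_l S (v\<lparr>vP0 := P\<rparr>) k = Gam_l S v k"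
  by (simp add: Gam_l_def)

lemma Etotal_vP0_update [simp]: "Etotal S (v\<lparr>vP0 := P\<rparr>) = Etotal S v"
  by (simp add: Etotal_def E1_def E2_def)

lemma Gam_b_vP0_mono:
  assumes "0 \<le> ssigma2 S" "0 \<le> szeta S" "0 \<le> vrho v k" "0 \<le> vtb v k"
    and "0 \<le> vP0 v" "vP0 v \<le> P"
  shows "Gam_b S v k \<le> Gam_b S (v\<lparr>vP0 := P\<rparr>) k"
proof -
  define C where "C = szeta S * vrho v k * (cmod (hk S v k))\<^sup>2 * (cmod (gk S v k))\<^sup>2 / ssigma2 S"
  have "0 \<le> C"
    using assms(1-3) by (simp add: C_def)
  then have "0 \<le> C * vP0 v" "C * vP0 v \<le> C * P"
    using assms(5,6) by (simp_all add: mult_left_mono)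
  then have "log 2 (1 + C * vP0 v) \<le> log 2 (1 + C * P)"
    by simp
  then have "vtb v k * log 2 (1 + C * vP0 v) \<le> vtb v k * log 2 (1 + C * P)"
    using assms(4) by (rule mult_left_mono)
  then show ?thesis
    by (simp add: Gam_b_def C_def mult_ac)
qed

lemma Rsum_vP0_mono:
  assumes "0 \<le> ssigma2 S" "0 \<le> szeta S"
    and "\<And>k. k < sK S \<Longrightarrow> 0 \<le> vrho v k \<and> 0 \<le> vtb v k"
    and "0 \<le> vP0 v" "vP0 v \<le> P"
  shows "Rsum S v \<le> Rsum S (v\<lparr>vP0 := P\<rparr>)"
  unfolding Rsum_def using assms by (intro sum_mono) (simp add: Gam_b_vP0_mono)

lemma Eb_vP0_mono:
  assumes "0 < sc S k" "sb S k \<le> sa S k * sc S k"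
    and "0 \<le> vrho v k" "vrho v k \<le> 1" "0 \<le> vtb v k"
    and "0 \<le> vP0 v" "vP0 v \<le> P"
  shows "Eb S v k \<le> Eb S (v\<lparr>vP0 := P\<rparr>) k"
proof -
  define D where "D = (1 - vrho v k) * (cmod (gk S v k))\<^sup>2"
  have "0 \<le> D"
    using assms(4) by (simp add: D_def)
  then have "(sa S k * (D * vP0 v) + sb S k) / (D * vP0 v + sc S k)
      \<le> (sa S k * (D * P) + sb S k) / (D * P + sc S k)"
    using assms(1,2,6,7) by (intro affine_ratio_mono) (simp_all add: mult_left_mono)
  then have "((sa S k * (D * vP0 v) + sb S k) / (D * vP0 v + sc S k) - sb S k / sc S k) * vtb v k
      \<le> ((sa S k * (D * P) + sb S k) / (D * P + sc S k) - sb S k / sc S k) * vtb v k"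
    using assms(5) by (simp add: mult_right_mono)
  then show ?thesis
    by (simp add: Eb_def D_def mult_ac)
qed

lemma Pb_vP0_mono:
  assumes "0 < sc S k" "sb S k \<le> sa S k * sc S k"
    and "0 \<le> vP0 v" "vP0 v \<le> P"
  shows "Pb S v k \<le> Pb S (v\<lparr>vP0 := P\<rparr>) k"
proof -
  have "(sa S k * ((cmod (gk S v k))\<^sup>2 * vP0 v) + sb S k) / ((cmod (gk S v k))\<^sup>2 * vP0 v + sc S k)
      \<le> (sa S k * ((cmod (gk S v k))\<^sup>2 * P) + sb S k) / ((cmod (gk S v k))\<^sup>2 * P + sc S k)"
    using assms by (intro affine_ratio_mono) (simp_all add: mult_left_mono)
  then show ?thesis
    by (simp add: Pb_def mult_ac)
qed

lemma Et_vP0_mono: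
  assumes "0 < sc S k" "sb S k \<le> sa S k * sc S k"
    and "0 \<le> vrho v k" "vrho v k \<le> 1"
    and "\<And>i. i < sK S \<Longrightarrow> 0 \<le> vtb v i" "k < sK S"
    and "0 \<le> vP0 v" "vP0 v \<le> P"
  shows "Et S v k \<le> Et S (v\<lparr>vP0 := P\<rparr>) k"
proof -
  have "Pb S v k * vtb v i \<le> Pb S (v\<lparr>vP0 := P\<rparr>) k * vtb v i" if "i < sK S" for i
    using Pb_vP0_mono[OF assms(1,2,7,8)] assms(5)[OF that] by (rule mult_right_mono)
  then have "(\<Sum>i\<in>{..<sK S} - {k}. Pb S v k * vtb v i)
      \<le> (\<Sum>i\<in>{..<sK S} - {k}. Pb S (v\<lparr>vP0 := P\<rparr>) k * vtb v i)"
    by (intro sum_mono) simp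
  moreover have "Eb S v k \<le> Eb S (v\<lparr>vP0 := P\<rparr>) k"
    using assms by (intro Eb_vP0_mono) simp_all
  ultimately show ?thesis
    by (simp add: Et_def)
qed

lemma feasible_vP0_update:
  assumes "feasible S v" "vP0 v \<le> P" "P \<le> sPmax S"
    and "0 \<le> ssigma2 S" "0 \<le> szeta S"
    and "\<And>k. k < sK S \<Longrightarrow> 0 < sc S k \<and> sb S k \<le> sa S k * sc S k"
  shows "feasible S (v\<lparr>vP0 := P\<rparr>)"
proof -
  let ?v' = "v\<lparr>vP0 := P\<rparr>"
  have rate: "Gam_b S v k \<le> Gam_b S ?v' k" if "k < sK S" for k
    using assms(1,2,4,5) that by (intro Gam_b_vP0_mono) (auto simp: feasible_def)
  have harvest: "Et S v k \<le> Et S ?v' k" if "k < sK S" for k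
    using assms(1,2,6) that by (intro Et_vP0_mono) (auto simp: feasible_def)
  have "E1 S ?v' k + E2 S ?v' k = E1 S v k + E2 S v k" for k
    by (simp add: E1_def E2_def)
  with assms(1-3) rate harvest show ?thesis
    unfolding feasible_def by (fastforce intro: order_trans add_right_mono)
qed

lemma Etotal_nonneg:
  assumes "feasible S v" "0 \<le> sdelta S"
    and "\<And>k. k < sK S \<Longrightarrow> 0 \<le> seps S k \<and> 0 \<le> sPc S k \<and> 0 \<le> spc S k"
  shows "0 \<le> Etotal S v"
  unfolding Etotal_def E1_def E2_def
  using assms by (intro sum_nonneg add_nonneg_nonneg mult_nonneg_nonneg divide_nonneg_nonneg)
    (auto simp: feasible_def)

theorem proposition3:
  fixes S :: sys
  assumes "0 < sT S" and "0 < ssigma2 S" and "0 < szeta S" and "0 < sCcpu S"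
    and "0 < sdelta S"
    and "\<And>k. k < sK S \<Longrightarrow> 0 < seps S k \<and> 0 < sPc S k \<and> 0 < spc S k
             \<and> 0 < sa S k \<and> 0 < sb S k \<and> 0 < sc S k \<and> 0 \<le> sQ S k \<and> 0 < sgmin S k"
    and EH_mono: "\<And>k. k < sK S \<Longrightarrow> sb S k \<le> sa S k * sc S k"
  shows "\<forall>v. feasible S v \<longrightarrow>
           (\<exists>v'. feasible S v' \<and> vP0 v' = sPmax S \<and> EE S v \<le> EE S v')"
proof (intro allI impI)
  fix v assume feas: "feasible S v"
  let ?v' = "v\<lparr>vP0 := sPmax S\<rparr>"
  have P0: "0 \<le> vP0 v" "vP0 v \<le> sPmax S"
    using feas by (simp_all add: feasible_def)
  have "feasible S ?v'"
    using feas P0 assms(2,3,6) EH_mono by (intro feasible_vP0_update) (simp_all add: less_imp_le)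
  moreover have "Rsum S v \<le> Rsum S ?v'"
    using feas assms(2,3) P0 by (intro Rsum_vP0_mono) (simp_all add: feasible_def less_imp_le)
  moreover have "0 \<le> Etotal S v"
    using feas assms(5,6) by (intro Etotal_nonneg) (auto simp: less_imp_le)
  ultimately show "\<exists>v'. feasible S v' \<and> vP0 v' = sPmax S \<and> EE S v \<le> EE S v'"
    by (intro exI[of _ ?v']) (simp add: EE_def divide_right_mono)
qed

end
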